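(* Let $A$ be a synaptic algebra and let $p,q\in P$ be in generic position ($p\wedge q=p\wedge q^{\perp}=p^{\perp}\wedge q=p^{\perp}\wedge q^{\perp}=0$). Let $c:=(pqp+p^{\perp}q^{\perp}p^{\perp})^{1/2}$, let $u$ and $v$ be the symmetries of the polar decompositions of $p-q^{\perp}$ and $p-q$, respectively, and put $j:=uvp+pvu$ (so that $q=c^2p+csj+s^2p^{\perp}$ with $s:=(pq^{\perp}p+p^{\perp}qp^{\perp})^{1/2}$). Let $z\in P$. Then $z\in C(p)\cap C(q)$ iff there exists a projection $t\in P$ such that $t=tp=pt\in C(c)$ and $z=t+jtj$.
   Context: Synaptic algebra (Foulis): $R$ is a real linear associative algebra with unit $1$, and $A\subseteq R$ is a real linear subspace with $1\in A$. For $a,b\in A$ write $aCb$ iff $ab=ba$; $C(a):=\{b\in A: aCb\}$; $CC(a):=\{b\in A: bCd \text{ for all } d\in C(a)\}$. $A$ is a synaptic algebra with enveloping algebra $R$ iff: (SA1) $A$ is a partially ordered archimedean real linear space with positive cone $A^+$, $1$ is an order unit, $\|\cdot\|$ the order-unit norm; (SA2) $a\in A\Rightarrow a^2\in A^+$; (SA3) $a,b\in A^+\Rightarrow aba\in A^+$; (SA4) if $a\in A$, $b\in A^+$, $aba=0$ then $ab=ba=0$; (SA5) if $a\in A^+$ there is $b\in A^+\cap CC(a)$ with $b^2=a$; (SA6) for $a\in A$ there is $p=p^2\in A$ with $ab=0\Leftrightarrow pb=0$ for all $b\in A$; (SA7) if $1\le a$ there is $b\in A$ with $ab=ba=1$;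 (SA8) if $a,b\in A$, $a_1\le a_2\le\cdots$ are pairwise commuting elements of $C(b)$ with $\|a-a_n\|\to0$, then $a\in C(b)$. $A$ is nondegenerate. Products are computed in $R$. $P:=\{p\in A:p=p^2\}$ with inherited order is an orthomodular lattice with $p^{\perp}:=1-p$, meet $\wedge$, join $\vee$. For $0\le a$, $a^{1/2}$ is its unique positive square root in $A$, $|a|:=(a^2)^{1/2}$; $a^{\circ}$ is the carrier of $a$ (the unique projection with $ab=0\Leftrightarrow a^{\circ}b=0$ for all $b\in A$). A symmetry is $u\in A$ with $u^2=1$. For $a\in A$, the signum $t$ of $a$ is the partial symmetry with $t^2=a^{\circ}$, $t\in CC(a)$, $a=|a|t=t|a|$; the symmetry of the polar decomposition of $a$ is $t+(a^{\circ})^{\perp}$. *)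

theory Defs
  imports Complex_Main
begin

text \<open>The enveloping algebra R is a type of class
real_algebra_1 (real linear associative algebra with unit); A is a subset of R,
and the partial order on A is given by its positive cone Apos.\<close>

definition leA :: "'r::real_algebra_1 set \<Rightarrow> 'r \<Rightarrow> 'r \<Rightarrow> bool" where
  "leA Apos a b \<longleftrightarrow> b - a \<in> Apos"

definition commA :: "'r::real_algebra_1 set \<Rightarrow> 'r \<Rightarrow> 'r set" where
  "commA A a = {b \<in> A. a * b = b * a}"

definition bicommA :: "'r::real_algebra_1 set \<Rightarrow> 'r \<Rightarrow> 'r set" where
  "bicommA A a = {b \<in> A. \<forall>d \<in> commA A a. b * d = d * b}"

definition ounorm :: "'r::real_algebra_1 set \<Rightarrow> 'r \<Rightarrow> real" where
  "ounorm Apos a = Inf {l. 0 < l \<and> leA Apos (- (l *\<^sub>R 1)) a \<and> leA Apos a (l *\<^sub>R 1)}"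

definition synaptic_algebra :: "'r::real_algebra_1 set \<Rightarrow> 'r set \<Rightarrow> bool" where
  "synaptic_algebra A Apos \<longleftrightarrow>
     subspace A \<and> 1 \<in> A \<and>
     \<comment> \<open>SA1: partially ordered archimedean real linear space, 1 an order unit\<close>
     Apos \<subseteq> A \<and>
     (\<forall>a \<in> Apos. \<forall>b \<in> Apos. a + b \<in> Apos) \<and>
     (\<forall>a \<in> Apos. \<forall>l::real. 0 \<le> l \<longrightarrow> l *\<^sub>R a \<in> Apos) \<and>
     (\<forall>a. a \<in> Apos \<and> - a \<in> Apos \<longrightarrow> a = 0) \<and>
     (\<forall>a \<in> A. \<forall>b \<in> A. (\<forall>n::nat. leA Apos (of_nat n *\<^sub>R a) b) \<longrightarrow> leA Apos a 0) \<and>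
     1 \<in> Apos \<and>
     (\<forall>a \<in> A. \<exists>n::nat. leA Apos a (of_nat n *\<^sub>R 1)) \<and>
     \<comment> \<open>SA2\<close>
     (\<forall>a \<in> A. a * a \<in> Apos) \<and>
     \<comment> \<open>SA3\<close>
     (\<forall>a \<in> Apos. \<forall>b \<in> Apos. a * b * a \<in> Apos) \<and>
     \<comment> \<open>SA4\<close>
     (\<forall>a \<in> A. \<forall>b \<in> Apos. a * b * a = 0 \<longrightarrow> a * b = 0 \<and> b * a = 0) \<and>
     \<comment> \<open>SA5\<close>
     (\<forall>a \<in> Apos. \<exists>b \<in> Apos \<inter> bicommA A a. b * b = a) \<and>
     \<comment> \<open>SA6\<close>
     (\<forall>a \<in> A. \<exists>p \<in> A. p * p = p \<and> (\<forall>b \<in> A. a * b = 0 \<longleftrightarrow> p * b = 0)) \<and>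
     \<comment> \<open>SA7\<close>
     (\<forall>a \<in> A. leA Apos 1 a \<longrightarrow> (\<exists>b \<in> A. a * b = 1 \<and> b * a = 1)) \<and>
     \<comment> \<open>SA8\<close>
     (\<forall>a \<in> A. \<forall>b \<in> A. \<forall>f :: nat \<Rightarrow> 'r.
        (\<forall>n. f n \<in> commA A b) \<and> (\<forall>m n. f m * f n = f n * f m) \<and>
        (\<forall>n. leA Apos (f n) (f (Suc n))) \<and>
        (\<lambda>n. ounorm Apos (a - f n)) \<longlonglongrightarrow> 0
        \<longrightarrow> a \<in> commA A b) \<and>
     \<comment> \<open>nondegenerate\<close>
     (1::'r) \<noteq> 0"

definition projs :: "'r::real_algebra_1 set \<Rightarrow> 'r set" where
  "projs A = {p \<in> A. p * p = p}"

definition proj_meet :: "'r::real_algebra_1 set \<Rightarrow> 'r set \<Rightarrow> 'r \<Rightarrow> 'r \<Rightarrow> 'r" where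
  "proj_meet A Apos p q = (THE m. m \<in> projs A \<and> leA Apos m p \<and> leA Apos m q \<and>
      (\<forall>r \<in> projs A. leA Apos r p \<and> leA Apos r q \<longrightarrow> leA Apos r m))"

definition sqrtA :: "'r::real_algebra_1 set \<Rightarrow> 'r \<Rightarrow> 'r" where
  "sqrtA Apos a = (THE b. b \<in> Apos \<and> b * b = a)"

definition absA :: "'r::real_algebra_1 set \<Rightarrow> 'r \<Rightarrow> 'r" where
  "absA Apos a = sqrtA Apos (a * a)"

definition carrierA :: "'r::real_algebra_1 set \<Rightarrow> 'r \<Rightarrow> 'r" where
  "carrierA A a = (THE p. p \<in> projs A \<and> (\<forall>b \<in> A. a * b = 0 \<longleftrightarrow> p * b = 0))"

definition signumA :: "'r::real_algebra_1 set \<Rightarrow> 'r set \<Rightarrow> 'r \<Rightarrow> 'r" where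
  "signumA A Apos a = (THE t. t \<in> A \<and> t * t = carrierA A a \<and> t \<in> bicommA A a \<and>
      a = absA Apos a * t \<and> a = t * absA Apos a)"

definition polar_sym :: "'r::real_algebra_1 set \<Rightarrow> 'r set \<Rightarrow> 'r \<Rightarrow> 'r" where
  "polar_sym A Apos a = signumA A Apos a + (1 - carrierA A a)"

end

theory Submission
  imports Defs
begin

text \<open>With \<open>a = p - q\<close> and \<open>b = p - q\<^sup>\<perp>\<close> one has \<open>a\<^sup>2 + b\<^sup>2 = 1\<close> and \<open>ab = -ba\<close>.
Generic position makes the carriers of \<open>a\<close> and \<open>b\<close> equal to \<open>1\<close>, so their signa \<open>v\<close>, \<open>u\<close> are
symmetries with \<open>a = sv\<close>, \<open>b = cu\<close>, where \<open>s = |a|\<close> and \<open>c = |b|\<close> lie in the bicommutant of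
\<open>a\<^sup>2 = 1 - b\<^sup>2\<close>. Uniqueness of polar decompositions forces \<open>u\<close> and \<open>v\<close> to anticommute, and then
\<open>j = su - cv\<close> is a symmetry exchanging \<open>p\<close> and \<open>p\<^sup>\<perp>\<close> in terms of which \<open>v = s(2p - 1) - cj\<close>.
Hence a projection \<open>z\<close> commutes with \<open>p\<close> and \<open>q\<close> iff it commutes with \<open>p\<close>, \<open>c\<close> and \<open>j\<close>, and such
a \<open>z\<close> is determined by \<open>t = zp\<close> through \<open>z = t + jtj\<close>.\<close>

lemma double_eq_cancel: "(x::'a::real_vector) + x = y + y \<Longrightarrow> x = y"
  by (metis scaleR_half_double)

lemma commute_mult: "(x::'a::semigroup_mult) * y = y * x \<Longrightarrow> x * w = w * x \<Longrightarrow> x * (y * w) = (y * w) * x"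
  by (metis mult.assoc)

lemma commute_add: "(x::'a::semiring) * y = y * x \<Longrightarrow> x * w = w * x \<Longrightarrow> x * (y + w) = (y + w) * x"
  by (simp add: distrib_left distrib_right)

lemma commute_diff: "(x::'a::ring) * y = y * x \<Longrightarrow> x * w = w * x \<Longrightarrow> x * (y - w) = (y - w) * x"
  by (simp add: left_diff_distrib right_diff_distrib)

text \<open>Here \<open>s\<close> and \<open>c\<close> act as sine and cosine rotating the pair of anticommuting symmetries
\<open>(v, u)\<close> into \<open>(2p - 1, j)\<close> with \<open>j = su - cv\<close>.\<close>

lemma exchange_symmetry:
  fixes s c u v p :: "'a::real_algebra_1"
  assumes "u * u = 1" "v * v = 1" "v * u = - (u * v)"
    and "u * s = s * u" "v * s = s * v" "u * c = c * u" "v * c = c * v"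
    and "c * s = s * c" "s * s = 1 - c * c" and twice_p: "p + p - 1 = s * v + c * u"
  shows "u * v * p + p * v * u = s * u - c * v"
    and "(s * u - c * v) * (s * u - c * v) = 1"
    and "(s * u - c * v) * p = (1 - p) * (s * u - c * v)"
    and "v = s * (p + p - 1) - c * (s * u - c * v)"
proof -
  have "u * (u * w) = w" and "v * (v * w) = w" and "v * (u * w) = - (u * (v * w))"
    and "u * (s * w) = s * (u * w)" and "v * (s * w) = s * (v * w)"
    and "u * (c * w) = c * (u * w)" and "v * (c * w) = c * (v * w)"
    and "c * (s * w) = s * (c * w)" and "s * (s * w) = w - c * (c * w)" for w
    using assms by (simp_all add: mult.assoc[symmetric] left_diff_distrib)
  note R = this assms(1-9)
  define J where "J = s * u - c * v"
  have "(u * v * p + p * v * u) + (u * v * p + p * v * u)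
      = u * v * (p + p - 1) + (p + p - 1) * (v * u) + (u * v + v * u)"
    by (simp add: algebra_simps)
  also have "\<dots> = J + J" unfolding twice_p J_def by (simp add: algebra_simps R)
  finally show "u * v * p + p * v * u = s * u - c * v" unfolding J_def by (rule double_eq_cancel)
  show "(s * u - c * v) * (s * u - c * v) = 1" by (simp add: algebra_simps R)
  have "J * (p + p - 1) = u * v" "(p + p - 1) * J = - (u * v)"
    unfolding twice_p J_def by (simp_all add: algebra_simps R)
  hence "(J * p + J * p - J) + (p * J + p * J - J) = 0" by (simp add: algebra_simps)
  hence "(J * p + p * J) + (J * p + p * J) = J + J" by (simp add: algebra_simps)
  hence "J * p + p * J = J" by (rule double_eq_cancel)
  thus "(s * u - c * v) * p = (1 - p) * (s * u - c * v)"
    unfolding J_def[symmetric] by (simp add: algebra_simps)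
  show "v = s * (p + p - 1) - c * (s * u - c * v)" unfolding twice_p by (simp add: algebra_simps R)
qed

lemma exchange_symmetry_decompose:
  fixes j p z :: "'a::ring_1"
  assumes jj: "j * j = 1" and jp: "j * p = (1 - p) * j" and zj: "z * j = j * z"
  shows "z = z * p + j * (z * p) * j"
proof -
  have "j * (z * p) * j = z * (j * p * j)" using zj by (metis mult.assoc)
  also have "\<dots> = z * (1 - p)" using jp jj by (simp add: mult.assoc)
  finally show ?thesis by (simp add: right_diff_distrib)
qed

lemma exchange_symmetry_compose:
  fixes j p t :: "'a::ring_1"
  assumes jj: "j * j = 1" and jp: "j * p = (1 - p) * j" and tp: "t * p = t" and pt: "p * t = t"
  shows "(t + j * t * j) * p = t" and "p * (t + j * t * j) = t"
    and "(t + j * t * j) * j = j * (t + j * t * j)"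
proof -
  have pj: "p * j = j * (1 - p)"
  proof -
    have "p * j = j * (j * p) * j" using jj by (simp add: mult.assoc[symmetric])
    also have "\<dots> = j * (1 - p)" using jp jj by (simp add: mult.assoc)
    finally show ?thesis .
  qed
  have "j * t * j * p = j * (t * (1 - p)) * j" using jp by (simp add: mult.assoc)
  thus "(t + j * t * j) * p = t" using tp by (simp add: distrib_right right_diff_distrib)
  have "p * (j * t * j) = j * ((1 - p) * t) * j" using pj by (simp add: mult.assoc[symmetric])
  thus "p * (t + j * t * j) = t" using pt by (simp add: distrib_left left_diff_distrib)
  have "j * (j * w) = w" for w using jj by (simp add: mult.assoc[symmetric])
  thus "(t + j * t * j) * j = j * (t + j * t * j)"
    using jj by (simp add: distrib_left distrib_right mult.assoc add.commute)
qed

locale synaptic =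
  fixes A Apos :: "'a::real_algebra_1 set"
  assumes synaptic_algebra: "synaptic_algebra A Apos"
begin

lemma synaptic_algebraD:
  "subspace A \<and> 1 \<in> A \<and> Apos \<subseteq> A \<and> (\<forall>a. a \<in> Apos \<and> - a \<in> Apos \<longrightarrow> a = 0) \<and> 1 \<in> Apos \<and>
   (\<forall>a \<in> A. a * a \<in> Apos) \<and>
   (\<forall>a \<in> Apos. \<forall>b \<in> Apos. a * b * a \<in> Apos) \<and>
   (\<forall>a \<in> A. \<forall>b \<in> Apos. a * b * a = 0 \<longrightarrow> a * b = 0 \<and> b * a = 0) \<and>
   (\<forall>a \<in> Apos. \<exists>b \<in> Apos \<inter> bicommA A a. b * b = a) \<and>
   (\<forall>a \<in> A. \<exists>p \<in> A. p * p = p \<and> (\<forall>b \<in> A. a * b = 0 \<longleftrightarrow> p * b = 0))"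
  using synaptic_algebra unfolding synaptic_algebra_def by (elim conjE) (intro conjI; assumption)

lemma subspace: "subspace A"
  using synaptic_algebraD by blast

lemma one_mem [simp, intro]: "1 \<in> A"
  using synaptic_algebraD by blast

lemma pos_mem: "x \<in> Apos \<Longrightarrow> x \<in> A"
  using synaptic_algebraD by blast

lemma pos_antisym: "x \<in> Apos \<Longrightarrow> - x \<in> Apos \<Longrightarrow> x = 0"
  using synaptic_algebraD by blast

lemma one_pos: "1 \<in> Apos"
  using synaptic_algebraD by blast

lemma square_pos: "x \<in> A \<Longrightarrow> x * x \<in> Apos"
  using synaptic_algebraD by blast

lemma sandwich_pos: "x \<in> Apos \<Longrightarrow> y \<in> Apos \<Longrightarrow> x * y * x \<in> Apos"
  using synaptic_algebraD by blast

lemma sandwich_eq_zero: "x \<in> A \<Longrightarrow> y \<in> Apos \<Longrightarrow> x * y * x = 0 \<Longrightarrow> x * y = 0 \<and> y * x = 0"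
  using synaptic_algebraD by blast

lemma pos_sqrt_exists: "x \<in> Apos \<Longrightarrow> \<exists>b \<in> Apos \<inter> bicommA A x. b * b = x"
  using synaptic_algebraD by blast

lemma carrier_exists: "x \<in> A \<Longrightarrow> \<exists>p \<in> A. p * p = p \<and> (\<forall>b \<in> A. x * b = 0 \<longleftrightarrow> p * b = 0)"
  using synaptic_algebraD by blast

lemma add_mem [intro]: "x \<in> A \<Longrightarrow> y \<in> A \<Longrightarrow> x + y \<in> A"
  using subspace by (rule subspace_add)

lemma diff_mem [intro]: "x \<in> A \<Longrightarrow> y \<in> A \<Longrightarrow> x - y \<in> A"
  using subspace by (rule subspace_diff)

lemma uminus_mem [intro]: "x \<in> A \<Longrightarrow> - x \<in> A"
  using subspace by (rule subspace_neg)

lemma square_mem [intro]: "x \<in> A \<Longrightarrow> x * x \<in> A"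
  using square_pos pos_mem by blast

lemma jordan_mem [intro]: "x \<in> A \<Longrightarrow> y \<in> A \<Longrightarrow> x * y + y * x \<in> A"
proof -
  assume "x \<in> A" "y \<in> A"
  moreover have "x * y + y * x = (x + y) * (x + y) - x * x - y * y" by (simp add: algebra_simps)
  ultimately show ?thesis by (metis add_mem diff_mem square_mem)
qed

lemma commuting_mult_mem: "x \<in> A \<Longrightarrow> y \<in> A \<Longrightarrow> x * y = y * x \<Longrightarrow> x * y \<in> A"
proof -
  assume "x \<in> A" "y \<in> A" "x * y = y * x"
  hence "(1/2::real) *\<^sub>R (x * y + x * y) \<in> A" using jordan_mem subspace subspace_scale by metis
  thus ?thesis by simp
qed

lemma sandwich_mem [intro]: "x \<in> A \<Longrightarrow> y \<in> A \<Longrightarrow> x * y * x \<in> A"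
proof -
  assume x: "x \<in> A" and y: "y \<in> A"
  have "(x * (x * y + y * x) + (x * y + y * x) * x) - ((x * x) * y + y * (x * x))
      = x * y * x + x * y * x"
    by (simp add: algebra_simps)
  moreover have "x * (x * y + y * x) + (x * y + y * x) * x - ((x * x) * y + y * (x * x)) \<in> A"
    using x y by blast
  ultimately have "(1/2::real) *\<^sub>R (x * y * x + x * y * x) \<in> A"
    using subspace subspace_scale by metis
  thus ?thesis by simp
qed

lemma square_eq_zero: "x \<in> A \<Longrightarrow> x * x = 0 \<Longrightarrow> x = 0"
  using sandwich_eq_zero[of x 1] one_pos by simp

lemma pos_add_eq_zero: "x \<in> Apos \<Longrightarrow> y \<in> Apos \<Longrightarrow> x + y = 0 \<Longrightarrow> x = 0"
  by (metis add_eq_0_iff pos_antisym)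

lemma commuting_mult_pos:
  assumes y: "y \<in> Apos" and z: "z \<in> Apos" and yz: "y * z = z * y"
  shows "y * z \<in> Apos"
proof -
  obtain g where g: "g \<in> Apos" "g \<in> bicommA A y" "g * g = y" using pos_sqrt_exists[OF y] by blast
  have "z \<in> commA A y" using z yz pos_mem unfolding commA_def by auto
  hence "g * z = z * g" using g(2) unfolding bicommA_def by auto
  hence "y * z = g * z * g" using g(3) by (metis mult.assoc)
  thus ?thesis using sandwich_pos[OF g(1) z] by simp
qed

text \<open>If one product vanishes, \<open>xy + yx \<in> A\<close> squares to zero; similarly below with \<open>edg + gde\<close>.\<close>

lemma mult_eq_zero_commute:
  assumes x: "x \<in> A" and y: "y \<in> A"
  shows "x * y = 0 \<longleftrightarrow> y * x = 0"
proof -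
  have sq: "(x * y + y * x) * (x * y + y * x) = x * y * (x * y) + x * y * (y * x) + (y * x * (x * y) + y * x * (y * x))"
    by (simp add: distrib_left distrib_right add_ac)
  have "x * y * (x * y) = x * (y * x) * y" "y * x * (y * x) = y * (x * y) * x"
    by (simp_all add: mult.assoc)
  hence "(x * y + y * x) * (x * y + y * x) = 0" if "x * y = 0 \<or> y * x = 0"
    unfolding sq using that by auto
  hence "x * y + y * x = 0" if "x * y = 0 \<or> y * x = 0"
    using that square_eq_zero jordan_mem[OF x y] by blast
  thus ?thesis by auto
qed

lemma triple_eq_zero_swap:
  assumes "e \<in> A" "d \<in> A" "g \<in> A" "e * g = 0" "e * d * g = 0"
  shows "g * d * e = 0"
proof -
  have "e * d * g + g * d * e = (e + g) * d * (e + g) - e * d * e - g * d * g"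
    by (simp add: algebra_simps)
  hence "e * d * g + g * d * e \<in> A" using assms(1-3) by (metis add_mem diff_mem sandwich_mem)
  moreover have "(g * d * e) * (g * d * e) = g * d * (e * g) * d * e" by (simp only: mult.assoc)
  ultimately show ?thesis using assms(4,5) square_eq_zero by simp
qed

lemma proj_mem: "e \<in> projs A \<Longrightarrow> e \<in> A"
  unfolding projs_def by auto

lemma proj_idem: "e \<in> projs A \<Longrightarrow> e * e = e"
  unfolding projs_def by auto

lemma proj_pos: "e \<in> projs A \<Longrightarrow> e \<in> Apos"
  by (metis proj_mem proj_idem square_pos)

lemma zero_proj: "0 \<in> projs A"
  unfolding projs_def using subspace subspace_0 by auto

lemma proj_compl: "e \<in> projs A \<Longrightarrow> 1 - e \<in> projs A"
  unfolding projs_def by (auto simp: algebra_simps)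

lemma proj_mult_proj:
  assumes e: "e \<in> projs A" and f: "f \<in> projs A" and ef: "e * f = f * e"
  shows "e * f \<in> projs A"
proof -
  have "e * f * (e * f) = e * (f * e) * f" by (simp add: mult.assoc)
  also have "\<dots> = (e * e) * (f * f)" unfolding ef[symmetric] by (simp add: mult.assoc)
  also have "\<dots> = e * f" using proj_idem[OF e] proj_idem[OF f] by simp
  finally show ?thesis
    using commuting_mult_mem[OF proj_mem[OF e] proj_mem[OF f] ef] unfolding projs_def by blast
qed

lemma proj_mult_eq_self_commute:
  assumes r: "r \<in> projs A" and e: "e \<in> projs A"
  shows "r * e = r \<longleftrightarrow> e * r = r"
  using mult_eq_zero_commute[OF proj_mem[OF r] proj_mem[OF proj_compl[OF e]]]
  by (auto simp: algebra_simps)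

lemma proj_le_iff:
  assumes r: "r \<in> projs A" and e: "e \<in> projs A"
  shows "leA Apos r e \<longleftrightarrow> r * e = r"
proof
  assume "r * e = r"
  hence "(e - r) * (e - r) = e - r"
    using proj_idem[OF r] proj_idem[OF e] proj_mult_eq_self_commute[OF r e] by (simp add: algebra_simps)
  hence "e - r \<in> Apos" using square_pos proj_mem[OF r] proj_mem[OF e] by (metis diff_mem)
  thus "leA Apos r e" unfolding leA_def .
next
  assume "leA Apos r e"
  hence "(1 - e) * (e - r) * (1 - e) \<in> Apos"
    unfolding leA_def using sandwich_pos proj_pos[OF proj_compl[OF e]] by blast
  moreover have "(1 - e) * r * (1 - e) \<in> Apos"
    using sandwich_pos proj_pos[OF proj_compl[OF e]] proj_pos[OF r] by blast
  moreover have "(1 - e) * (e - r) * (1 - e) = - ((1 - e) * r * (1 - e))"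
    using proj_idem[OF e] by (simp add: algebra_simps)
  ultimately have "(1 - e) * r * (1 - e) = 0" using pos_antisym by auto
  hence "r * (1 - e) = 0"
    using sandwich_eq_zero[OF proj_mem[OF proj_compl[OF e]] proj_pos[OF r]] by blast
  thus "r * e = r" by (simp add: algebra_simps)
qed

section \<open>Square roots\<close>

lemma pos_sqrt_unique:
  assumes r: "r \<in> Apos" "r \<in> bicommA A x" "r * r = x" and b: "b \<in> Apos" "b * b = x"
  shows "b = r"
proof -
  have rA: "r \<in> A" and bA: "b \<in> A" using r b pos_mem by auto
  have "b \<in> commA A x" using bA b(2) unfolding commA_def by (auto simp: mult.assoc)
  hence rb: "r * b = b * r" using r(2) unfolding bicommA_def by auto
  define d where "d = r - b"
  have dA: "d \<in> A" unfolding d_def using rA bA by blast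
  text \<open>\<open>drd\<close> and \<open>dbd\<close> are positive, and their sum \<open>d(r + b)d = (r - b)(r + b)d\<close> vanishes.\<close>
  have sandwich_d: "d * w * d \<in> Apos" if w: "w \<in> Apos" "w * r = r * w" "w * b = b * w" for w
  proof -
    have "d * w = w * d" using w(2,3) unfolding d_def by (simp add: algebra_simps)
    hence "d * w * d = w * (d * d)" and "w * (d * d) = d * d * w" by (metis mult.assoc)+
    thus ?thesis using commuting_mult_pos[OF w(1) square_pos[OF dA]] by simp
  qed
  have X: "d * r * d \<in> Apos" and Y: "d * b * d \<in> Apos"
    using sandwich_d[OF r(1)] sandwich_d[OF b(1)] rb by auto
  have "d * (r + b) = 0" unfolding d_def using rb r(3) b(2) by (simp add: algebra_simps)
  moreover have "d * r * d + d * b * d = d * (r + b) * d" by (simp add: algebra_simps)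
  ultimately have "d * r * d + d * b * d = 0" by simp
  hence "d * r * d = 0" "d * b * d = 0" using pos_add_eq_zero X Y by (auto simp: add.commute)
  hence "d * r = 0" "d * b = 0" using sandwich_eq_zero dA r(1) b(1) by blast+
  hence "d * d = 0" unfolding d_def by (simp add: right_diff_distrib)
  hence "d = 0" using square_eq_zero dA by blast
  thus ?thesis unfolding d_def by simp
qed

lemma sqrtA:
  assumes x: "x \<in> Apos"
  shows "sqrtA Apos x \<in> Apos" "sqrtA Apos x * sqrtA Apos x = x" "sqrtA Apos x \<in> bicommA A x"
proof -
  obtain r where r: "r \<in> Apos" "r \<in> bicommA A x" "r * r = x" using pos_sqrt_exists[OF x] by blast
  have "sqrtA Apos x = r" unfolding sqrtA_def
  proof (rule the_equality)
    show "r \<in> Apos \<and> r * r = x" using r by simp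
    show "b = r" if "b \<in> Apos \<and> b * b = x" for b using pos_sqrt_unique[OF r] that by blast
  qed
  thus "sqrtA Apos x \<in> Apos" "sqrtA Apos x * sqrtA Apos x = x" "sqrtA Apos x \<in> bicommA A x"
    using r by auto
qed

lemma absA:
  assumes "a \<in> A"
  shows "absA Apos a \<in> A" "absA Apos a * absA Apos a = a * a" "absA Apos a \<in> bicommA A (a * a)"
  using sqrtA[OF square_pos[OF assms]] pos_mem unfolding absA_def by simp_all

section \<open>Carriers\<close>

lemma carrier_unique:
  assumes a: "a \<in> A"
  shows "\<exists>!e. e \<in> projs A \<and> (\<forall>b\<in>A. a * b = 0 \<longleftrightarrow> e * b = 0)"
proof -
  obtain e where e: "e \<in> A" "e * e = e" "\<forall>b\<in>A. a * b = 0 \<longleftrightarrow> e * b = 0"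
    using carrier_exists[OF a] by blast
  have dominates: "e1 = e1 * e2"
    if "e1 \<in> projs A" "\<forall>b\<in>A. a * b = 0 \<longleftrightarrow> e1 * b = 0"
      and "e2 \<in> projs A" "\<forall>b\<in>A. a * b = 0 \<longleftrightarrow> e2 * b = 0" for e1 e2
  proof -
    have "e2 * (1 - e2) = 0" using proj_idem[OF that(3)] by (simp add: algebra_simps)
    hence "e1 * (1 - e2) = 0" using that proj_mem[OF proj_compl[OF that(3)]] by blast
    thus ?thesis by (simp add: algebra_simps)
  qed
  have "e1 = e2"
    if "e1 \<in> projs A" "\<forall>b\<in>A. a * b = 0 \<longleftrightarrow> e1 * b = 0"
      and "e2 \<in> projs A" "\<forall>b\<in>A. a * b = 0 \<longleftrightarrow> e2 * b = 0" for e1 e2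
    using dominates[OF that] dominates[OF that(3,4,1,2)]
      proj_mult_eq_self_commute[OF that(1,3)] proj_mult_eq_self_commute[OF that(3,1)] by metis
  moreover have "e \<in> projs A" using e unfolding projs_def by auto
  ultimately show ?thesis using e(3) by blast
qed

lemma carrierA:
  assumes "a \<in> A"
  shows "carrierA A a \<in> projs A" "\<forall>b\<in>A. a * b = 0 \<longleftrightarrow> carrierA A a * b = 0"
  using theI'[OF carrier_unique[OF assms]] unfolding carrierA_def by auto

lemma carrierA_eqI:
  "a \<in> A \<Longrightarrow> e \<in> projs A \<Longrightarrow> \<forall>b\<in>A. a * b = 0 \<longleftrightarrow> e * b = 0 \<Longrightarrow> carrierA A a = e"
  unfolding carrierA_def by (rule the1_equality[OF carrier_unique]) auto

lemma carrierA_uminus: "a \<in> A \<Longrightarrow> carrierA A (- a) = carrierA A a"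
  using carrierA by (intro carrierA_eqI) auto

lemma mult_carrierA:
  assumes a: "a \<in> A"
  shows "a * carrierA A a = a" "carrierA A a * a = a"
proof -
  let ?e = "carrierA A a"
  have "?e * (1 - ?e) = 0" using proj_idem[OF carrierA(1)[OF a]] by (simp add: algebra_simps)
  hence "a * (1 - ?e) = 0"
    using bspec[OF carrierA(2)[OF a] proj_mem[OF proj_compl[OF carrierA(1)[OF a]]]] by simp
  moreover from this have "(1 - ?e) * a = 0"
    using mult_eq_zero_commute[OF a proj_mem[OF proj_compl[OF carrierA(1)[OF a]]]] by blast
  ultimately show "a * ?e = a" "?e * a = a" by (simp_all add: algebra_simps)
qed

text \<open>With \<open>g = 1 - e\<close>: \<open>e d g = 0\<close> because \<open>a\<close> kills \<open>dg + gd\<close>, and then \<open>g d e = 0\<close> too.\<close>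

lemma carrierA_commute:
  assumes a: "a \<in> A" and d: "d \<in> A" and da: "d * a = a * d"
  shows "d * carrierA A a = carrierA A a * d"
proof -
  let ?e = "carrierA A a" and ?g = "1 - carrierA A a"
  have eA: "?e \<in> A" and gA: "?g \<in> A" and ee: "?e * ?e = ?e"
    using carrierA(1)[OF a] proj_mem proj_idem by blast+
  have eg: "?e * ?g = 0" using ee by (simp add: algebra_simps)
  have ag: "a * ?g = 0" using mult_carrierA(1)[OF a] by (simp add: algebra_simps)
  have "a * (d * ?g) = d * (a * ?g)" using da by (simp add: mult.assoc[symmetric])
  moreover have "a * (?g * d) = (a * ?g) * d" by (simp add: mult.assoc)
  ultimately have "a * (d * ?g + ?g * d) = 0" using ag by (simp add: distrib_left)
  hence "?e * (d * ?g + ?g * d) = 0" using carrierA(2)[OF a] d gA by blast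
  hence edg: "?e * d * ?g = 0" using eg by (simp add: distrib_left mult.assoc[symmetric])
  have gde: "?g * d * ?e = 0" using triple_eq_zero_swap[OF eA d gA eg edg] .
  have "d * ?e = ?e * d * ?e" using gde by (simp add: left_diff_distrib)
  moreover have "?e * d = ?e * d * ?e" using edg by (simp add: right_diff_distrib)
  ultimately show ?thesis by simp
qed

section \<open>Meets and generic position\<close>

lemma proj_meet_greatest:
  assumes p: "p \<in> projs A" and q: "q \<in> projs A"
    and r: "r \<in> projs A" "leA Apos r p" "leA Apos r q"
  shows "leA Apos r (proj_meet A Apos p q)"
proof -
  define \<Phi> where "\<Phi> m \<longleftrightarrow> m \<in> projs A \<and> leA Apos m p \<and> leA Apos m q \<and>
      (\<forall>r \<in> projs A. leA Apos r p \<and> leA Apos r q \<longrightarrow> leA Apos r m)" for m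
  text \<open>The meet is the complement of the carrier of \<open>p\<^sup>\<perp> + q\<^sup>\<perp>\<close>.\<close>
  define X where "X = (1 - p) + (1 - q)"
  have XA: "X \<in> A" unfolding X_def using p q proj_mem by blast
  define m where "m = 1 - carrierA A X"
  have mP: "m \<in> projs A" unfolding m_def using proj_compl[OF carrierA(1)[OF XA]] .
  have mA: "m \<in> A" using proj_mem[OF mP] .
  have "X * m = 0" unfolding m_def using mult_carrierA(1)[OF XA] by (simp add: algebra_simps)
  moreover have "m * (1 - p) * m + m * (1 - q) * m = m * (X * m)"
    unfolding X_def by (simp only: distrib_left distrib_right mult.assoc)
  ultimately have "m * (1 - p) * m + m * (1 - q) * m = 0" by simp
  moreover have cp: "1 - p \<in> Apos" "1 - q \<in> Apos" using proj_pos proj_compl p q by auto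
  moreover have "m * (1 - p) * m \<in> Apos" "m * (1 - q) * m \<in> Apos"
    using sandwich_pos[OF proj_pos[OF mP]] cp by auto
  ultimately have "m * (1 - p) * m = 0" "m * (1 - q) * m = 0"
    using pos_add_eq_zero by (auto simp: add.commute)
  hence "m * (1 - p) = 0" "m * (1 - q) = 0" using sandwich_eq_zero[OF mA] cp by blast+
  hence m_le: "leA Apos m p" "leA Apos m q"
    using proj_le_iff[OF mP p] proj_le_iff[OF mP q] by (simp_all add: algebra_simps)
  have m_greatest: "leA Apos r' m" if r': "r' \<in> projs A" "leA Apos r' p" "leA Apos r' q" for r'
  proof -
    have "r' * p = r'" "r' * q = r'" using proj_le_iff r' p q by auto
    hence "p * r' = r'" "q * r' = r'" using proj_mult_eq_self_commute r' p q by auto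
    hence "X * r' = 0" unfolding X_def by (simp add: distrib_right left_diff_distrib)
    hence "carrierA A X * r' = 0" using carrierA(2)[OF XA] proj_mem[OF r'(1)] by blast
    hence "r' * carrierA A X = 0"
      using mult_eq_zero_commute[OF proj_mem[OF r'(1)] proj_mem[OF carrierA(1)[OF XA]]] by blast
    thus ?thesis unfolding m_def using proj_le_iff[OF r'(1) mP] by (simp add: algebra_simps m_def)
  qed
  have "\<Phi> m" unfolding \<Phi>_def using mP m_le m_greatest by auto
  moreover have "m' = m" if "\<Phi> m'" for m'
  proof -
    have "leA Apos m' m" "leA Apos m m'" using that \<open>\<Phi> m\<close> unfolding \<Phi>_def by auto
    thus ?thesis unfolding leA_def using pos_antisym by fastforce
  qed
  ultimately have "proj_meet A Apos p q = m"
    unfolding proj_meet_def \<Phi>_def[symmetric] by (rule the_equality)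
  thus ?thesis using m_greatest r by simp
qed

lemma proj_meet_eq_zeroD:
  assumes p: "p \<in> projs A" and q: "q \<in> projs A" and meet: "proj_meet A Apos p q = 0"
    and r: "r \<in> projs A" "r * p = r" "r * q = r"
  shows "r = 0"
proof -
  have "leA Apos r 0"
    using proj_meet_greatest[OF p q r(1)] proj_le_iff[OF r(1)] p q r meet by simp
  thus ?thesis using proj_le_iff[OF r(1) zero_proj] by simp
qed

text \<open>Although \<open>p\<close> need not commute with \<open>p - q\<close>, with \<open>f = 1 - e\<close> the element \<open>p - q\<close> still
kills \<open>pf + fp\<close>, which is all the argument for \<open>carrierA_commute\<close> needs.\<close>

lemma proj_commute_carrierA_diff:
  assumes p: "p \<in> projs A" and q: "q \<in> projs A"
  shows "p * carrierA A (p - q) = carrierA A (p - q) * p"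
proof -
  have pA: "p \<in> A" and qA: "q \<in> A" and pp: "p * p = p" and qq: "q * q = q"
    using p q proj_mem proj_idem by auto
  have aA: "p - q \<in> A" using pA qA by blast
  define e where "e = carrierA A (p - q)"
  define f where "f = 1 - e"
  have eA: "e \<in> A" and fA: "f \<in> A" and ee: "e * e = e"
    using carrierA(1)[OF aA] proj_mem proj_idem proj_compl unfolding e_def f_def by blast+
  have "(p - q) * f = 0" using mult_carrierA(1)[OF aA] unfolding f_def e_def by (simp add: algebra_simps)
  hence pf: "p * f = q * f" by (simp add: left_diff_distrib)
  have "(p - q) * (p * f) = p * p * f - q * (p * f)" by (simp add: left_diff_distrib mult.assoc)
  also have "\<dots> = 0" using pp qq pf by (simp add: mult.assoc[symmetric])
  finally have "(p - q) * (p * f) = 0" .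
  moreover have "(p - q) * (f * p) = (p * f - q * f) * p" by (simp add: left_diff_distrib mult.assoc)
  ultimately have "(p - q) * (p * f + f * p) = 0" using pf by (simp add: distrib_left)
  hence "e * (p * f + f * p) = 0" using carrierA(2)[OF aA] pA fA unfolding e_def by blast
  moreover have ef: "e * f = 0" unfolding f_def using ee by (simp add: algebra_simps)
  ultimately have epf: "e * p * f = 0" by (simp add: distrib_left mult.assoc[symmetric])
  have "f * p * e = 0" using triple_eq_zero_swap[OF eA pA fA ef epf] .
  hence "p * e = e * p * e" unfolding f_def by (simp add: left_diff_distrib)
  moreover have "e * p = e * p * e" using epf unfolding f_def by (simp add: right_diff_distrib)
  ultimately show ?thesis unfolding e_def by simp
qed

text \<open>The complement \<open>f\<close> of the carrier commutes with \<open>p\<close> and \<open>q\<close> and satisfies \<open>pf = qf\<close>, so \<open>pf\<close>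
lies under \<open>p\<close> and \<open>q\<close>; once \<open>pf = qf = 0\<close>, \<open>f\<close> lies under \<open>p\<^sup>\<perp>\<close> and \<open>q\<^sup>\<perp>\<close>.\<close>

lemma carrierA_diff_eq_one:
  assumes p: "p \<in> projs A" and q: "q \<in> projs A"
    and meet: "proj_meet A Apos p q = 0" and meet_compl: "proj_meet A Apos (1 - p) (1 - q) = 0"
  shows "carrierA A (p - q) = 1"
proof -
  have pA: "p \<in> A" and qA: "q \<in> A" and pp: "p * p = p" and qq: "q * q = q"
    using p q proj_mem proj_idem by auto
  have aA: "p - q \<in> A" using pA qA by blast
  define f where "f = 1 - carrierA A (p - q)"
  have fP: "f \<in> projs A" unfolding f_def using proj_compl[OF carrierA(1)[OF aA]] .
  have "(p - q) * f = 0" unfolding f_def using mult_carrierA(1)[OF aA] by (simp add: algebra_simps)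
  hence pf: "p * f = q * f" by (simp add: left_diff_distrib)
  have pf_comm: "p * f = f * p"
    unfolding f_def using proj_commute_carrierA_diff[OF p q] by (simp add: algebra_simps)
  have "q * carrierA A (q - p) = carrierA A (q - p) * q" using proj_commute_carrierA_diff[OF q p] .
  moreover have "carrierA A (q - p) = carrierA A (p - q)"
    using carrierA_uminus[OF aA] by simp
  ultimately have qf_comm: "q * f = f * q" unfolding f_def by (simp add: algebra_simps)
  have pfP: "p * f \<in> projs A" using proj_mult_proj[OF p fP pf_comm] .
  have "p * f = 0"
  proof (rule proj_meet_eq_zeroD[OF p q meet pfP])
    show "p * f * p = p * f" using pf_comm pp by (metis mult.assoc)
    show "p * f * q = p * f" using pf qf_comm qq by (metis mult.assoc)
  qed
  moreover from this have "q * f = 0" using pf by simp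
  ultimately have "f = 0"
    using proj_meet_eq_zeroD[OF proj_compl[OF p] proj_compl[OF q] meet_compl fP] pf_comm qf_comm
    by (simp add: right_diff_distrib)
  thus ?thesis unfolding f_def by simp
qed

section \<open>Polar decomposition of elements with carrier one\<close>

lemma polar_factor_unique:
  assumes a: "a \<in> A" and carrier: "carrierA A a = 1"
    and t: "t \<in> A" "a = t * absA Apos a" "a = absA Apos a * t"
    and t': "t' \<in> A" "a = absA Apos a * t'"
  shows "t' = t"
proof -
  have "a * (t - t') = (t * absA Apos a) * (t - t')"
    using t(2) by (rule arg_cong[where f = "\<lambda>x. x * (t - t')"])
  also have "\<dots> = t * (absA Apos a * t - absA Apos a * t')"
    by (simp add: right_diff_distrib mult.assoc)
  also have "absA Apos a * t = absA Apos a * t'" using t(3) t'(2) by (rule trans[OF sym])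
  finally have "a * (t - t') = 0" by simp
  hence "carrierA A a * (t - t') = 0" using carrierA(2)[OF a] t t' by blast
  thus ?thesis using carrier by simp
qed

text \<open>The signum is \<open>1 - 2e\<close>, where \<open>e\<close> is the carrier of \<open>|a| - a\<close>, which annihilates \<open>|a| + a\<close>.\<close>

lemma signum_exists:
  assumes a: "a \<in> A"
  shows "\<exists>t. t \<in> A \<and> t * t = 1 \<and> t \<in> bicommA A a \<and> a = absA Apos a * t \<and> a = t * absA Apos a"
proof -
  define S where "S = absA Apos a"
  have SA: "S \<in> A" and S: "S * S = a * a" "S \<in> bicommA A (a * a)"
    using absA[OF a] unfolding S_def by auto
  have aS: "S * a = a * S" using S(2) a unfolding bicommA_def commA_def by (simp add: mult.assoc)
  define X where "X = S - a"
  have XA: "X \<in> A" unfolding X_def using SA a by blast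
  define e where "e = carrierA A X"
  have eA: "e \<in> A" and ee: "e * e = e"
    using carrierA(1)[OF XA] proj_mem proj_idem unfolding e_def by auto
  have Xe: "X * e = X" "e * X = X" using mult_carrierA[OF XA] unfolding e_def by auto
  have "X * (S + a) = 0" unfolding X_def using aS S(1) by (simp add: algebra_simps)
  hence eY: "e * (S + a) = 0" using carrierA(2)[OF XA] SA a unfolding e_def by blast
  hence Ye: "(S + a) * e = 0"
    using mult_eq_zero_commute[OF _ eA] SA a unfolding e_def by blast
  define t where "t = 1 - (e + e)"
  have tA: "t \<in> A" unfolding t_def using eA by blast
  have tt: "t * t = 1" unfolding t_def using ee by (simp add: algebra_simps)
  have "S * e - a * e = S - a" "S * e + a * e = 0"
    using Xe(1) Ye unfolding X_def by (simp_all add: left_diff_distrib distrib_right)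
  moreover have "S * e + S * e = (S * e - a * e) + (S * e + a * e)" by simp
  ultimately have "S * e + S * e = S - a" by simp
  hence St: "S * t = a" unfolding t_def by (simp add: algebra_simps)
  have "e * S - e * a = S - a" "e * S + e * a = 0"
    using Xe(2) eY unfolding X_def by (simp_all add: right_diff_distrib distrib_left)
  moreover have "e * S + e * S = (e * S - e * a) + (e * S + e * a)" by simp
  ultimately have "e * S + e * S = S - a" by simp
  hence tS: "t * S = a" unfolding t_def by (simp add: algebra_simps)
  have "t * d = d * t" if d: "d \<in> commA A a" for d
  proof -
    have dA: "d \<in> A" and da: "a * d = d * a" using d unfolding commA_def by auto
    have "a * a * d = d * (a * a)" using da by (metis mult.assoc)
    hence "d \<in> commA A (a * a)" using dA unfolding commA_def by simp
    hence "S * d = d * S" using S(2) unfolding bicommA_def by blast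
    hence "d * X = X * d" unfolding X_def using da by (simp add: algebra_simps)
    hence "d * e = e * d" unfolding e_def using carrierA_commute[OF XA dA] by simp
    thus ?thesis unfolding t_def by (simp add: algebra_simps)
  qed
  hence "t \<in> bicommA A a" unfolding bicommA_def using tA by blast
  thus ?thesis unfolding S_def[symmetric] using tA tt St tS by (intro exI[of _ t]) simp
qed

lemma signumA:
  assumes a: "a \<in> A" and carrier: "carrierA A a = 1"
  shows "signumA A Apos a \<in> A" "signumA A Apos a * signumA A Apos a = 1"
    "signumA A Apos a \<in> bicommA A a"
    "a = absA Apos a * signumA A Apos a" "a = signumA A Apos a * absA Apos a"
proof -
  obtain t where t: "t \<in> A" "t * t = 1" "t \<in> bicommA A a" "a = absA Apos a * t" "a = t * absA Apos a"
    using signum_exists[OF a] by blast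
  have "signumA A Apos a = t" unfolding signumA_def carrier
  proof (rule the_equality)
    show "t \<in> A \<and> t * t = 1 \<and> t \<in> bicommA A a \<and> a = absA Apos a * t \<and> a = t * absA Apos a"
      using t by blast
    show "t' = t"
      if "t' \<in> A \<and> t' * t' = 1 \<and> t' \<in> bicommA A a \<and> a = absA Apos a * t' \<and> a = t' * absA Apos a"
      for t'
      using polar_factor_unique[OF a carrier t(1,5,4)] that by blast
  qed
  thus "signumA A Apos a \<in> A" "signumA A Apos a * signumA A Apos a = 1"
    "signumA A Apos a \<in> bicommA A a"
    "a = absA Apos a * signumA A Apos a" "a = signumA A Apos a * absA Apos a"
    using t by blast+
qed

lemma signumA_unique:
  assumes "a \<in> A" "carrierA A a = 1" "t \<in> A" "a = absA Apos a * t"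
  shows "t = signumA A Apos a"
  using polar_factor_unique[OF assms(1,2) signumA(1,5,4)[OF assms(1,2)] assms(3,4)] .

end

section \<open>Two projections in generic position\<close>

locale generic_position = synaptic +
  fixes p q :: "'a::real_algebra_1"
  assumes p: "p \<in> projs A" and q: "q \<in> projs A"
    and carrier_diff: "carrierA A (p - q) = 1"
    and carrier_diff_compl: "carrierA A (p - (1 - q)) = 1"
begin

definition s where "s = sqrtA Apos (p * (1 - q) * p + (1 - p) * q * (1 - p))"
definition c where "c = sqrtA Apos (p * q * p + (1 - p) * (1 - q) * (1 - p))"
definition u where "u = polar_sym A Apos (p - (1 - q))"
definition v where "v = polar_sym A Apos (p - q)"
definition j where "j = u * v * p + p * v * u"

lemma pA: "p \<in> A" and qA: "q \<in> A" and pp: "p * p = p" and qq: "q * q = q"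
  using p q proj_mem proj_idem by auto

lemma pp_assoc: "p * (p * w) = p * w" and qq_assoc: "q * (q * w) = q * w"
  using pp qq by (simp_all add: mult.assoc[symmetric])

lemma aA: "p - q \<in> A" and bA: "p - (1 - q) \<in> A"
  using pA qA by blast+

lemma s_eq_abs: "s = absA Apos (p - q)"
proof -
  have "p * (1 - q) * p + (1 - p) * q * (1 - p) = (p - q) * (p - q)"
    using pp qq by (simp add: algebra_simps pp_assoc qq_assoc)
  thus ?thesis unfolding s_def absA_def by simp
qed

lemma c_eq_abs: "c = absA Apos (p - (1 - q))"
proof -
  have "p * q * p + (1 - p) * (1 - q) * (1 - p) = (p - (1 - q)) * (p - (1 - q))"
    using pp qq by (simp add: algebra_simps pp_assoc qq_assoc)
  thus ?thesis unfolding c_def absA_def by simp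
qed

lemma v_eq_signum: "v = signumA A Apos (p - q)"
  unfolding v_def polar_sym_def carrier_diff by simp

lemma u_eq_signum: "u = signumA A Apos (p - (1 - q))"
  unfolding u_def polar_sym_def carrier_diff_compl by simp

lemma v_polar: "v \<in> A" "v * v = 1" "v \<in> bicommA A (p - q)" "p - q = s * v" "p - q = v * s"
  using signumA[OF aA carrier_diff] unfolding v_eq_signum s_eq_abs by blast+

lemma u_polar:
  "u \<in> A" "u * u = 1" "u \<in> bicommA A (p - (1 - q))" "p - (1 - q) = c * u" "p - (1 - q) = u * c"
  using signumA[OF bA carrier_diff_compl] unfolding u_eq_signum c_eq_abs by blast+

lemma s_abs: "s \<in> A" "s * s = (p - q) * (p - q)" "s \<in> bicommA A ((p - q) * (p - q))"
  using absA[OF aA] unfolding s_eq_abs by auto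

lemma c_abs: "c \<in> A" "c * c = (p - (1 - q)) * (p - (1 - q))"
    "c \<in> bicommA A ((p - (1 - q)) * (p - (1 - q)))"
  using absA[OF bA] unfolding c_eq_abs by auto

lemma squares_sum: "(p - (1 - q)) * (p - (1 - q)) = 1 - (p - q) * (p - q)"
  using pp qq by (simp add: algebra_simps)

lemma s_c_sum: "s * s = 1 - c * c"
  using s_abs(2) c_abs(2) squares_sum by simp

text \<open>As \<open>(p - q\<^sup>\<perp>)\<^sup>2 = 1 - (p - q)\<^sup>2\<close>, both \<open>s\<close> and \<open>c\<close> lie in the bicommutant of \<open>(p - q)\<^sup>2\<close>.\<close>

lemma commute_s: "x \<in> A \<Longrightarrow> x * ((p - q) * (p - q)) = (p - q) * (p - q) * x \<Longrightarrow> s * x = x * s"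
  using s_abs(3) unfolding bicommA_def commA_def by auto

lemma commute_c: "x \<in> A \<Longrightarrow> x * ((p - q) * (p - q)) = (p - q) * (p - q) * x \<Longrightarrow> c * x = x * c"
  using c_abs(3) unfolding bicommA_def commA_def squares_sum by (auto simp: algebra_simps)

lemma commute_square_diff:
  "x * p = p * x \<Longrightarrow> x * q = q * x \<Longrightarrow> x * ((p - q) * (p - q)) = (p - q) * (p - q) * x"
  by (intro commute_diff commute_mult)

lemma commute_square_diff_iff_compl:
  "x * ((p - q) * (p - q)) = (p - q) * (p - q) * x \<longleftrightarrow>
   x * ((p - (1 - q)) * (p - (1 - q))) = (p - (1 - q)) * (p - (1 - q)) * x"
  unfolding squares_sum by (auto simp: algebra_simps)

lemma p_commute_square_diff: "p * ((p - q) * (p - q)) = (p - q) * (p - q) * p"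
  using pp qq by (simp add: algebra_simps pp_assoc qq_assoc)

lemma c_commute_p: "c * p = p * c"
  using commute_c[OF pA] p_commute_square_diff by auto

lemma commute_u: "x \<in> A \<Longrightarrow> x * (p - (1 - q)) = (p - (1 - q)) * x \<Longrightarrow> u * x = x * u"
  using u_polar(3) unfolding bicommA_def commA_def by auto

lemma commute_v: "x \<in> A \<Longrightarrow> x * (p - q) = (p - q) * x \<Longrightarrow> v * x = x * v"
  using v_polar(3) unfolding bicommA_def commA_def by auto

lemma s_commute_c: "s * c = c * s"
proof (rule commute_s[OF c_abs(1)])
  show "c * ((p - q) * (p - q)) = (p - q) * (p - q) * c"
    using commute_square_diff_iff_compl c_abs(2) by (metis mult.assoc)
qed

lemma u_commute_s: "u * s = s * u" and u_commute_c: "u * c = c * u"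
proof -
  have "(p - (1 - q)) * ((p - q) * (p - q)) = (p - q) * (p - q) * (p - (1 - q))"
    using commute_square_diff_iff_compl by (metis mult.assoc)
  hence "s * (p - (1 - q)) = (p - (1 - q)) * s" "c * (p - (1 - q)) = (p - (1 - q)) * c"
    using commute_s[OF bA] commute_c[OF bA] by auto
  thus "u * s = s * u" "u * c = c * u" using commute_u s_abs(1) c_abs(1) by auto
qed

lemma v_commute_s: "v * s = s * v" and v_commute_c: "v * c = c * v"
proof -
  have "(p - q) * ((p - q) * (p - q)) = (p - q) * (p - q) * (p - q)" by (simp add: mult.assoc)
  hence "s * (p - q) = (p - q) * s" "c * (p - q) = (p - q) * c"
    using commute_s[OF aA] commute_c[OF aA] by auto
  thus "v * s = s * v" "v * c = c * v" using commute_v s_abs(1) c_abs(1) by auto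
qed

text \<open>\<open>c\<close> commutes with \<open>p - q\<close> and \<open>(p - q)(p - q\<^sup>\<perp>) = -(p - q\<^sup>\<perp>)(p - q)\<close>, so
\<open>(p - q\<^sup>\<perp>)(u(p - q) + (p - q)u) = u c (u(p - q) + (p - q)u) = 0\<close>.\<close>

lemma u_anticommute_diff: "u * (p - q) = - ((p - q) * u)"
proof -
  let ?a = "p - q" and ?b = "p - (1 - q)"
  have ab: "?a * ?b + ?b * ?a = 0" using pp qq by (simp add: algebra_simps)
  have ca: "c * ?a = ?a * c" using commute_c[OF aA] by (simp add: mult.assoc)
  have "c * (u * ?a + ?a * u) = (c * u) * ?a + ?a * (c * u)"
    using ca by (simp add: distrib_left mult.assoc[symmetric])
  also have "\<dots> = 0" using u_polar(4)[symmetric] ab by (simp add: add.commute)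
  finally have "?b * (u * ?a + ?a * u) = 0" using u_polar(5) by (simp add: mult.assoc)
  hence "carrierA A ?b * (u * ?a + ?a * u) = 0" using carrierA(2)[OF bA] u_polar(1) aA by blast
  thus ?thesis using carrier_diff_compl by (simp add: eq_neg_iff_add_eq_0)
qed

text \<open>\<open>-uvu\<close> is another polar factor of \<open>p - q\<close>, hence equals \<open>v\<close>.\<close>

lemma v_anticommute_u: "v * u = - (u * v)"
proof -
  have "s * - (u * v * u) = - (u * (s * v) * u)"
    using u_commute_s[symmetric] by (simp add: mult.assoc[symmetric])
  also have "\<dots> = - (u * (p - q) * u)" using v_polar(4) by simp
  also have "u * (p - q) * u = - ((p - q) * u) * u" using u_anticommute_diff by simp
  also have "- (- ((p - q) * u) * u) = p - q" using u_polar(2) by (simp add: mult.assoc)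
  finally have "p - q = absA Apos (p - q) * - (u * v * u)" unfolding s_eq_abs by (rule sym)
  hence "- (u * v * u) = signumA A Apos (p - q)"
    by (rule signumA_unique[OF aA carrier_diff uminus_mem[OF sandwich_mem[OF u_polar(1) v_polar(1)]]])
  hence "v * u = - (u * v * u) * u" unfolding v_eq_signum[symmetric] by simp
  thus ?thesis using u_polar(2) by (simp add: mult.assoc)
qed

lemmas exchange = exchange_symmetry[OF u_polar(2) v_polar(2) v_anticommute_u
    u_commute_s v_commute_s u_commute_c v_commute_c s_commute_c[symmetric] s_c_sum]

lemma two_p_minus_one_eq: "p + p - 1 = s * v + c * u"
proof -
  have "p + p - 1 = (p - q) + (p - (1 - q))" by (simp add: algebra_simps)
  thus ?thesis unfolding v_polar(4)[symmetric] u_polar(4)[symmetric] .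
qed

lemma j_eq: "j = s * u - c * v"
  unfolding j_def using exchange(1)[OF two_p_minus_one_eq] .

lemma j_symmetry: "j * j = 1" and j_exchange: "j * p = (1 - p) * j"
  and v_eq: "v = s * (p + p - 1) - c * j"
  using exchange(2-4)[OF two_p_minus_one_eq] unfolding j_eq by auto

lemma s_commute_j: "s * j = j * s" and c_commute_j: "c * j = j * c"
  unfolding j_eq by (intro commute_diff commute_mult;
      simp add: u_commute_s v_commute_s u_commute_c v_commute_c s_commute_c)+

lemma commute_p_q_imp_commute_j:
  assumes x: "x \<in> A" and xp: "x * p = p * x" and xq: "x * q = q * x"
  shows "x * s = s * x" "x * c = c * x" "x * j = j * x"
proof -
  have "x * ((p - q) * (p - q)) = (p - q) * (p - q) * x" using commute_square_diff[OF xp xq] .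
  thus xs: "x * s = s * x" and xc: "x * c = c * x" using commute_s[OF x] commute_c[OF x] by auto
  have "x * (p - q) = (p - q) * x" "x * (p - (1 - q)) = (p - (1 - q)) * x"
    using xp xq by (simp_all add: algebra_simps)
  hence "x * v = v * x" "x * u = u * x" using commute_v[OF x] commute_u[OF x] by auto
  thus "x * j = j * x" unfolding j_eq using xs xc by (intro commute_diff commute_mult) simp_all
qed

lemma commute_p_s_c_j_imp_commute_q:
  assumes xp: "x * p = p * x" and xs: "x * s = s * x" and "x * c = c * x" "x * j = j * x"
  shows "x * q = q * x"
proof -
  have "x * v = v * x" unfolding v_eq using assms by (intro commute_diff commute_mult commute_add) simp_all
  hence "x * (p - q) = (p - q) * x" unfolding v_polar(4) using xs by (intro commute_mult) simp_all
  thus ?thesis using xp by (simp add: algebra_simps)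
qed

lemma proj_commute_iff:
  assumes z: "z \<in> projs A"
  shows "z \<in> commA A p \<inter> commA A q \<longleftrightarrow>
    (\<exists>t \<in> projs A. t = t * p \<and> t = p * t \<and> t \<in> commA A c \<and> z = t + j * t * j)"
proof
  assume "z \<in> commA A p \<inter> commA A q"
  hence zp: "z * p = p * z" and zq: "z * q = q * z" unfolding commA_def by auto
  have zA: "z \<in> A" using proj_mem[OF z] .
  note zsj = commute_p_q_imp_commute_j[OF zA zp zq]
  have zpP: "z * p \<in> projs A" using proj_mult_proj[OF z p zp] .
  moreover have "z * p = z * p * p" "z * p = p * (z * p)" using zp pp by (metis mult.assoc)+
  moreover have "c * (z * p) = z * p * c" using zsj(2)[symmetric] c_commute_p by (rule commute_mult)
  hence "z * p \<in> commA A c" unfolding commA_def using proj_mem[OF zpP] by simp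
  moreover have "z = z * p + j * (z * p) * j"
    using exchange_symmetry_decompose[OF j_symmetry j_exchange zsj(3)] .
  ultimately show "\<exists>t \<in> projs A. t = t * p \<and> t = p * t \<and> t \<in> commA A c \<and> z = t + j * t * j"
    by blast
next
  assume "\<exists>t \<in> projs A. t = t * p \<and> t = p * t \<and> t \<in> commA A c \<and> z = t + j * t * j"
  then obtain t where t: "t \<in> projs A" "t * p = t" "p * t = t" and tc: "t \<in> commA A c"
    and zt: "z = t + j * t * j" by auto
  have tA: "t \<in> A" using proj_mem[OF t(1)] .
  have zA: "z \<in> A" using z proj_mem by blast
  note zpj = exchange_symmetry_compose[OF j_symmetry j_exchange t(2,3), folded zt]
  have "t * c = c * t" using tc unfolding commA_def by simp
  hence "t * (c * c) = c * c * t" by (metis mult.assoc)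
  hence "s * t = t * s"
    using commute_s[OF tA] commute_square_diff_iff_compl c_abs(2) by simp
  hence "z * s = s * z" "z * c = c * z"
    unfolding zt using \<open>t * c = c * t\<close> s_commute_j c_commute_j
    by (metis commute_add commute_mult)+
  moreover have zp: "z * p = p * z" using zpj by simp
  ultimately have "z * q = q * z"
    using commute_p_s_c_j_imp_commute_q zpj(3) by blast
  thus "z \<in> commA A p \<inter> commA A q" unfolding commA_def using zA zp by simp
qed

end

theorem theorem8p3:
  fixes A Apos :: "'r::real_algebra_1 set" and p q z :: 'r
  assumes SA: "synaptic_algebra A Apos"
    and p: "p \<in> projs A" and q: "q \<in> projs A"
    and g1: "proj_meet A Apos p q = 0"
    and g2: "proj_meet A Apos p (1 - q) = 0"
    and g3: "proj_meet A Apos (1 - p) q = 0"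
    and g4: "proj_meet A Apos (1 - p) (1 - q) = 0"
    and z: "z \<in> projs A"
  shows "let c = sqrtA Apos (p * q * p + (1 - p) * (1 - q) * (1 - p));
             u = polar_sym A Apos (p - (1 - q));
             v = polar_sym A Apos (p - q);
             j = u * v * p + p * v * u
         in z \<in> commA A p \<inter> commA A q \<longleftrightarrow>
            (\<exists>t \<in> projs A. t = t * p \<and> t = p * t \<and> t \<in> commA A c \<and> z = t + j * t * j)"
proof -
  interpret synaptic A Apos using SA by (rule synaptic.intro)
  have "carrierA A (p - q) = 1" using carrierA_diff_eq_one[OF p q g1 g4] .
  moreover have "carrierA A (p - (1 - q)) = 1"
    using carrierA_diff_eq_one[OF p proj_compl[OF q] g2] g3 by simp
  ultimately interpret generic_position A Apos p q
    using p q by unfold_locales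
  show ?thesis using proj_commute_iff[OF z] unfolding c_def u_def v_def j_def Let_def .
qed

end
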